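(* Assume the constraints $\mathcal A_{\mathbf w}$ are generic. For $\theta\in L_{\mathbb R}$ outside some locus of codimension $2$ (in particular, for every $\theta$ contained in at most one hyperplane of the form $n^\perp$ with $n\in\Lambda\setminus\{0\}$), every tropical disk type in $\mathfrak T_{\mathbf w}(\theta)$ is trivalent.
   Context: $\Lambda$ finite-rank lattice with skew form $\{\cdot,\cdot\}$, $L=\Lambda^\vee$, $p^*:\Lambda\to L$, $n\mapsto\{\cdot,n\}$; $\Lambda^+$ the nonzero elements of $\sigma\cap\Lambda$ for a strictly convex rational polyhedral cone $\sigma\subset\Lambda_{\mathbb R}$. $\{e_i\}_{i\in I}$ a finite collection of vectors in $\Lambda^+$, $v_i=p^*(e_i)$. A weight vector is $\mathbf w=(\mathbf w_i)_{i\in I}$, $\mathbf w_i=(w_{i1}\le\dots\le w_{il_i})$ positive integers. Tropical disks in $L_{\mathbb R}$: $\bar\Gamma$ a finite tree without bivalent vertices; $\Gamma$ the complement in $\bar\Gamma$ of all univalent vertices but one, $V_\infty$; positive integer weights $w$ on edges; a bijection $s\mapsto E_s$ from an index set $S$ to the non-compact edges; and a proper continuous map $h:\Gamma\to L_{\mathbb R}$ embedding each edge into an affine line of rational slope, balanced ($\sum_{E\ni V}w(E)u_{(V,E)}=0$, $u_{(V,E)}$ the primitive vector from $h(V)$ into $h(E)$) at every vertex $V\ne V_\infty$; up to isomorphism. Its type is the data $(\Gamma,w,\text{marking},(V,E)\mapsto u_{(V,E)})$; a type is trivalent if all vertices other than $V_\infty$ are trivalent. Degree $\Delta_{\mathbf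 w}$: $S=\{(i,j):i\in I,1\le j\le l_i\}$ and $w(E_{ij})u_{E_{ij}}=w_{ij}v_i$. Constraints $\mathcal A_{\mathbf w}=(A_{ij})$, $A_{ij}$ a translate of $e_i^\perp$ (generic, and mutually generic); $\delta\mathcal A_{\mathbf w}$ multiplies each $A_{ij}$ by $\delta>0$; a disk matches $\delta\mathcal A_{\mathbf w}$ if $h(E_{ij})\subset\delta A_{ij}$. $\mathfrak T_{\mathbf w,\delta}(\theta)$ is the set of types of disks of degree $\Delta_{\mathbf w}$ matching $\delta\mathcal A_{\mathbf w}$ with $h(V_\infty)=\theta$, and $\mathfrak T_{\mathbf w}(\theta)$ is the set of types $\tau$ such that for every $\epsilon>0$ and all sufficiently small $\delta>0$ there is $\theta'$ in the open $\epsilon$-ball about $\theta$ with $\tau\in\mathfrak T_{\mathbf w,\delta}(\theta')$. *)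

theory Defs
  imports "HOL-Analysis.Analysis"
begin

text \<open>The lattice \<Lambda> is identified with the integer points of real^'n
(a type-indexed coordinate space), \<Lambda>_R = real^'n, and L = \<Lambda>^dual is identified with
the integer points of real^'n via the standard dot product, so L_R = real^'n and
the pairing of theta in L_R with n in \<Lambda> is theta \<bullet> n.  The skew form is
{m,n} = m \<bullet> (Omega *v n) for an integer skew-symmetric matrix Omega, so that
p^*(n) = Omega *v n.\<close>

definition lattice_vec :: "real^'n \<Rightarrow> bool" where
  "lattice_vec x \<longleftrightarrow> (\<forall>k. x $ k \<in> \<int>)"

definition primitive_vec :: "real^'n \<Rightarrow> bool" where
  "primitive_vec x \<longleftrightarrow> lattice_vec x \<and> x \<noteq> 0 \<and>
     (\<forall>y (m::nat). lattice_vec y \<and> x = real m *\<^sub>R y \<longrightarrow> m = 1)"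

definition rat_poly_cone :: "(real^'n) set \<Rightarrow> bool" where
  "rat_poly_cone \<sigma> \<longleftrightarrow> (\<exists>G. finite G \<and> (\<forall>g\<in>G. lattice_vec g) \<and>
      \<sigma> = {x. \<exists>a. (\<forall>g\<in>G. a g \<ge> 0) \<and> x = (\<Sum>g\<in>G. a g *\<^sub>R g)})"

definition strictly_convex_cone :: "(real^'n) set \<Rightarrow> bool" where
  "strictly_convex_cone \<sigma> \<longleftrightarrow> \<sigma> \<inter> uminus ` \<sigma> = {0}"

definition Lambda_plus :: "(real^'n) set \<Rightarrow> (real^'n) set" where
  "Lambda_plus \<sigma> = {n. lattice_vec n \<and> n \<in> \<sigma> \<and> n \<noteq> 0}"

definition idx_set :: "('i \<Rightarrow> nat list) \<Rightarrow> ('i \<times> nat) set" where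
  "idx_set ww = {(i, j). 1 \<le> j \<and> j \<le> length (ww i)}"

definition wt :: "('i \<Rightarrow> nat list) \<Rightarrow> 'i \<times> nat \<Rightarrow> nat" where
  "wt ww s = ww (fst s) ! (snd s - 1)"

text \<open>A tropical disk type: vertices of \<Gamma> (including V_infinity), V_infinity, compact
edges (2-element vertex sets), the vertex to which the non-compact edge E_s is attached,
weights of compact / non-compact edges, primitive directions u_(V,E) for flags on compact
edges and for non-compact edges (pointing away from the vertex).\<close>
record ('i, 'v) tdtype =
  tverts :: "nat set"
  tinf :: nat
  tedges :: "nat set set"
  tattach :: "'i \<times> nat \<Rightarrow> nat"
  twc :: "nat set \<Rightarrow> nat"
  twn :: "'i \<times> nat \<Rightarrow> nat"
  tdir :: "nat \<Rightarrow> nat set \<Rightarrow> 'v"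
  tdirn :: "'i \<times> nat \<Rightarrow> 'v"

definition tdeg :: "('i \<times> nat) set \<Rightarrow> ('i, 'v) tdtype \<Rightarrow> nat \<Rightarrow> nat" where
  "tdeg S \<tau> V = card {e \<in> tedges \<tau>. V \<in> e} + card {s \<in> S. tattach \<tau> s = V}"

text \<open>(tau, hv) is a tropical disk with non-compact edges indexed by S, of type tau,
whose map h sends vertex V to hv V, each compact edge {V,V'} to the segment
[hv V, hv V'] and each non-compact edge E_s to the ray hv(attach s) + R_{\<ge>0} tdirn s.\<close>
definition is_tdisk :: "('i \<times> nat) set \<Rightarrow> ('i, real^'n) tdtype \<Rightarrow> (nat \<Rightarrow> real^'n) \<Rightarrow> bool" where
  "is_tdisk S \<tau> hv \<longleftrightarrow>
     finite (tverts \<tau>) \<and> tinf \<tau> \<in> tverts \<tau> \<and>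
     (\<forall>e\<in>tedges \<tau>. \<exists>a b. a \<in> tverts \<tau> \<and> b \<in> tverts \<tau> \<and> a \<noteq> b \<and> e = {a, b}) \<and>
     (\<forall>a\<in>tverts \<tau>. \<forall>b\<in>tverts \<tau>. (a, b) \<in> {(x, y). {x, y} \<in> tedges \<tau>}\<^sup>*) \<and>
     card (tedges \<tau>) + 1 = card (tverts \<tau>) \<and>
     (\<forall>s\<in>S. tattach \<tau> s \<in> tverts \<tau>) \<and>
     tdeg S \<tau> (tinf \<tau>) = 1 \<and>
     (\<forall>V\<in>tverts \<tau>. tdeg S \<tau> V \<noteq> 2) \<and>
     (\<forall>V\<in>tverts \<tau> - {tinf \<tau>}. tdeg S \<tau> V \<noteq> 1) \<and>
     (\<forall>e\<in>tedges \<tau>. twc \<tau> e > 0) \<and> (\<forall>s\<in>S. twn \<tau> s > 0) \<and>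
     (\<forall>V V'. {V, V'} \<in> tedges \<tau> \<and> V \<noteq> V' \<longrightarrow>
        primitive_vec (tdir \<tau> V {V, V'}) \<and>
        (\<exists>l>0. hv V' - hv V = l *\<^sub>R tdir \<tau> V {V, V'})) \<and>
     (\<forall>s\<in>S. primitive_vec (tdirn \<tau> s)) \<and>
     (\<forall>V\<in>tverts \<tau> - {tinf \<tau>}.
        (\<Sum>e\<in>{e \<in> tedges \<tau>. V \<in> e}. real (twc \<tau> e) *\<^sub>R tdir \<tau> V e) +
        (\<Sum>s\<in>{s \<in> S. tattach \<tau> s = V}. real (twn \<tau> s) *\<^sub>R tdirn \<tau> s) = 0)"

text \<open>Degree Delta_w: w(E_ij) u_(E_ij) = w_ij v_i with v_i = p^*(e_i) = Omega *v e_i.\<close>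
definition has_degree :: "real^'n^'n \<Rightarrow> ('i \<Rightarrow> real^'n) \<Rightarrow> ('i \<Rightarrow> nat list)
    \<Rightarrow> ('i, real^'n) tdtype \<Rightarrow> bool" where
  "has_degree \<Omega> e ww \<tau> \<longleftrightarrow>
     (\<forall>s\<in>idx_set ww. real (twn \<tau> s) *\<^sub>R tdirn \<tau> s = real (wt ww s) *\<^sub>R (\<Omega> *v e (fst s)))"

text \<open>Constraint A_ij = {x. x \<bullet> e_i = c_ij} (a translate of e_i^perp), scaled by delta.\<close>
definition matches :: "('i \<Rightarrow> real^'n) \<Rightarrow> ('i \<Rightarrow> nat list) \<Rightarrow> ('i \<times> nat \<Rightarrow> real) \<Rightarrow> real
    \<Rightarrow> ('i, real^'n) tdtype \<Rightarrow> (nat \<Rightarrow> real^'n) \<Rightarrow> bool" where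
  "matches e ww c \<delta> \<tau> hv \<longleftrightarrow>
     (\<forall>s\<in>idx_set ww. {hv (tattach \<tau> s) + t *\<^sub>R tdirn \<tau> s | t. t \<ge> 0}
                       \<subseteq> {x. x \<bullet> e (fst s) = \<delta> * c s})"

definition T_delta :: "real^'n^'n \<Rightarrow> ('i \<Rightarrow> real^'n) \<Rightarrow> ('i \<Rightarrow> nat list) \<Rightarrow> ('i \<times> nat \<Rightarrow> real)
    \<Rightarrow> real \<Rightarrow> real^'n \<Rightarrow> ('i, real^'n) tdtype set" where
  "T_delta \<Omega> e ww c \<delta> \<theta> = {\<tau>. \<exists>hv. is_tdisk (idx_set ww) \<tau> hv \<and> has_degree \<Omega> e ww \<tau> \<and>
       matches e ww c \<delta> \<tau> hv \<and> hv (tinf \<tau>) = \<theta>}"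

definition T_lim :: "real^'n^'n \<Rightarrow> ('i \<Rightarrow> real^'n) \<Rightarrow> ('i \<Rightarrow> nat list) \<Rightarrow> ('i \<times> nat \<Rightarrow> real)
    \<Rightarrow> real^'n \<Rightarrow> ('i, real^'n) tdtype set" where
  "T_lim \<Omega> e ww c \<theta> = {\<tau>. \<forall>\<epsilon>>0. \<exists>\<delta>0>0. \<forall>\<delta>. 0 < \<delta> \<and> \<delta> < \<delta>0 \<longrightarrow>
       (\<exists>\<theta>'. dist \<theta>' \<theta> < \<epsilon> \<and> \<tau> \<in> T_delta \<Omega> e ww c \<delta> \<theta>')}"

definition trivalent :: "('i \<times> nat) set \<Rightarrow> ('i, 'v) tdtype \<Rightarrow> bool" where
  "trivalent S \<tau> \<longleftrightarrow> (\<forall>V\<in>tverts \<tau> - {tinf \<tau>}. tdeg S \<tau> V = 3)"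

end

theory Submission
  imports Defs
begin

text \<open>Choose the constraint offsets c_ij without integer linear relation; the exceptional c lie
  in countably many hyperplanes, a null set.  For \<delta> c the realizations of a type \<tau> solve an
  integer linear system in the vertex positions and edge lengths whose equations are then
  independent over \<int>, because an integer relation between them, evaluated at a realization,
  is a relation between the c_ij and a divergence-free flow on the tree.  If \<tau> is not
  trivalent there are at least two more equations than unknowns besides the position of
  V_\<infinity>, so elimination leaves two independent integral linear forms n1, n2 on it which vanish
  along every deformation of \<tau>.  Rescaled differences of realizations for \<delta> \<rightarrow> 0 are such
  deformations, whence \<theta> lies on the two distinct rational hyperplanes n1^\<perp> and n2^\<perp>.\<close>

section \<open>Generic constraints\<close>

lemma null_sets_PiM_hyperplane:
  fixes S :: "'a set" and q :: "'a \<Rightarrow> real"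
  assumes fin: "finite S" and s0: "s0 \<in> S" and q0: "q s0 \<noteq> 0"
  shows "{c \<in> space (Pi\<^sub>M S (\<lambda>_. lborel)). (\<Sum>s\<in>S. q s * c s) = 0} \<in> null_sets (Pi\<^sub>M S (\<lambda>_. lborel))"
proof -
  interpret product_sigma_finite "\<lambda>_::'a. lborel :: real measure" by standard
  define A where "A = {c \<in> space (Pi\<^sub>M S (\<lambda>_. lborel)). (\<Sum>s\<in>S. q s * c s) = 0}"
  have "(\<lambda>c. \<Sum>s\<in>S. q s * c s) \<in> borel_measurable (Pi\<^sub>M S (\<lambda>_. lborel))"
    by (intro borel_measurable_sum borel_measurable_times measurable_component_singleton) auto
  then have A: "A \<in> sets (Pi\<^sub>M S (\<lambda>_. lborel))"
    unfolding A_def by measurable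
  have "emeasure (Pi\<^sub>M S (\<lambda>_. lborel)) A = (\<integral>\<^sup>+ c. indicator A c \<partial>(Pi\<^sub>M S (\<lambda>_. lborel)))"
    using A by simp
  also have "\<dots> = (\<integral>\<^sup>+ x. (\<integral>\<^sup>+ y. indicator A (x(s0 := y)) \<partial>lborel) \<partial>(Pi\<^sub>M (S - {s0}) (\<lambda>_. lborel)))"
    using product_nn_integral_insert[of "S - {s0}" s0 "indicator A"] fin A s0
    by (simp add: insert_absorb)
  also have "\<dots> = (\<integral>\<^sup>+ x. 0 \<partial>(Pi\<^sub>M (S - {s0}) (\<lambda>_. lborel :: real measure)))"
  proof (intro nn_integral_cong)
    fix x :: "'a \<Rightarrow> real"
    \<comment> \<open>on each line parallel to the s0-axis, A is at most one point\<close>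
    define y0 where "y0 = - (\<Sum>s\<in>S - {s0}. q s * x s) / q s0"
    have "indicator A (x(s0 := y)) \<le> (indicator {y0} y :: ennreal)" for y
    proof (cases "x(s0 := y) \<in> A")
      case True
      then have "(\<Sum>s\<in>S. q s * (x(s0 := y)) s) = 0" unfolding A_def by auto
      also have "(\<Sum>s\<in>S. q s * (x(s0 := y)) s) = q s0 * y + (\<Sum>s\<in>S - {s0}. q s * x s)"
        by (simp add: sum.remove[OF fin s0])
      finally have "y = y0" unfolding y0_def using q0 by (simp add: field_simps)
      then show ?thesis using True by simp
    qed simp
    then have "(\<integral>\<^sup>+ y. indicator A (x(s0 := y)) \<partial>lborel) \<le> (\<integral>\<^sup>+ y. indicator {y0} y \<partial>lborel)"
      by (intro nn_integral_mono)
    then show "(\<integral>\<^sup>+ y. indicator A (x(s0 := y)) \<partial>lborel) = 0" by simp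
  qed
  finally show ?thesis using A unfolding A_def by (simp add: null_sets_def)
qed

lemma ae_no_integer_relation:
  fixes S :: "'a set"
  assumes fin: "finite S"
  shows "\<exists>N \<in> null_sets (Pi\<^sub>M S (\<lambda>_. lborel :: real measure)). \<forall>c \<in> (\<Pi>\<^sub>E s\<in>S. UNIV) - N.
           \<forall>q::'a \<Rightarrow> int. (\<Sum>s\<in>S. of_int (q s) * c s) = 0 \<longrightarrow> (\<forall>s\<in>S. q s = 0)"
proof -
  define Q where "Q = {q \<in> (\<Pi>\<^sub>E s\<in>S. (UNIV::int set)). \<exists>s\<in>S. q s \<noteq> 0}"
  define N where "N = (\<Union>q\<in>Q. {c \<in> space (Pi\<^sub>M S (\<lambda>_. lborel :: real measure)).
                                 (\<Sum>s\<in>S. of_int (q s) * c s) = 0})"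
  have "countable Q"
    unfolding Q_def by (rule countable_subset[OF _ countable_PiE[OF fin]]) auto
  then have null: "N \<in> null_sets (Pi\<^sub>M S (\<lambda>_. lborel))"
    unfolding N_def
  proof (rule null_sets_UN')
    fix q assume "q \<in> Q"
    then obtain s0 where "s0 \<in> S" "q s0 \<noteq> 0" unfolding Q_def by auto
    then show "{c \<in> space (Pi\<^sub>M S (\<lambda>_. lborel)). (\<Sum>s\<in>S. real_of_int (q s) * c s) = 0}
        \<in> null_sets (Pi\<^sub>M S (\<lambda>_. lborel))"
      using null_sets_PiM_hyperplane[OF fin, of s0 "\<lambda>s. of_int (q s)"] by simp
  qed
  have no_rel: "\<forall>s\<in>S. q s = 0"
    if c: "c \<in> (\<Pi>\<^sub>E s\<in>S. UNIV) - N" and rel: "(\<Sum>s\<in>S. of_int (q s) * c s) = 0"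
    for c and q :: "'a \<Rightarrow> int"
  proof (intro ballI, rule ccontr)
    fix s assume s: "s \<in> S" and "q s \<noteq> 0"
    then have "restrict q S \<in> Q" unfolding Q_def by auto
    moreover have "c \<in> space (Pi\<^sub>M S (\<lambda>_. lborel :: real measure))" using c by (simp add: space_PiM)
    moreover have "(\<Sum>s\<in>S. of_int (restrict q S s) * c s) = 0" using rel by simp
    ultimately have "c \<in> N" unfolding N_def by blast
    with c show False by simp
  qed
  show ?thesis by (intro bexI[OF _ null] ballI allI impI no_rel)
qed

section \<open>Independence over \<int>\<close>

definition int_form :: "'v set \<Rightarrow> ('v \<Rightarrow> int) \<Rightarrow> ('v \<Rightarrow> real) \<Rightarrow> real" where
  "int_form X r x = (\<Sum>v\<in>X. of_int (r v) * x v)"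

definition int_indep :: "'v set \<Rightarrow> 'j set \<Rightarrow> ('j \<Rightarrow> 'v \<Rightarrow> int) \<Rightarrow> bool" where
  "int_indep X J r \<longleftrightarrow> (\<forall>q. (\<forall>v\<in>X. (\<Sum>j\<in>J. q j * r j v) = 0) \<longrightarrow> (\<forall>j\<in>J. q j = 0))"

lemma int_form_sum_rows:
  "(\<Sum>j\<in>J. of_int (q j) * int_form X (r j) x) = int_form X (\<lambda>v. \<Sum>j\<in>J. q j * r j v) x"
proof -
  have "(\<Sum>j\<in>J. of_int (q j) * int_form X (r j) x) = (\<Sum>j\<in>J. \<Sum>v\<in>X. of_int (q j * r j v) * x v)"
    unfolding int_form_def by (simp add: sum_distrib_left mult.assoc)
  also have "\<dots> = int_form X (\<lambda>v. \<Sum>j\<in>J. q j * r j v) x"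
    unfolding int_form_def by (subst sum.swap) (simp add: sum_distrib_right)
  finally show ?thesis .
qed

lemma int_indep_subset:
  assumes indep: "int_indep X J r" and sub: "J' \<subseteq> J" and fin: "finite J"
  shows "int_indep X J' r"
  unfolding int_indep_def
proof (intro allI impI)
  fix q assume h: "\<forall>v\<in>X. (\<Sum>j\<in>J'. q j * r j v) = 0"
  define q' where "q' j = (if j \<in> J' then q j else 0)" for j
  have "(\<Sum>j\<in>J. q' j * r j v) = 0" if v: "v \<in> X" for v
  proof -
    have "(\<Sum>j\<in>J. q' j * r j v) = (\<Sum>j\<in>J'. q' j * r j v)"
      by (rule sum.mono_neutral_right) (use fin sub in \<open>auto simp: q'_def\<close>)
    also have "\<dots> = (\<Sum>j\<in>J'. q j * r j v)"
      by (rule sum.cong) (auto simp: q'_def)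
    finally show ?thesis using h v by simp
  qed
  then have "\<forall>j\<in>J. q' j = 0" using indep unfolding int_indep_def by blast
  then show "\<forall>j\<in>J'. q j = 0" using sub unfolding q'_def by (metis subsetD)
qed

lemma int_indep_pair:
  assumes "int_indep X J r" "finite J" "j1 \<in> J" "j2 \<in> J" "j1 \<noteq> j2"
    and "\<forall>v\<in>X. q1 * r j1 v + q2 * r j2 v = 0"
  shows "q1 = 0 \<and> q2 = 0"
proof -
  have indep: "int_indep X {j1, j2} r" using int_indep_subset assms(1-4) by blast
  define q where "q j = (if j = j1 then q1 else q2)" for j
  have "\<forall>v\<in>X. (\<Sum>j\<in>{j1, j2}. q j * r j v) = 0" using assms(5,6) by (simp add: q_def)
  then have "q j1 = 0" "q j2 = 0" using indep unfolding int_indep_def by blast+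
  then show ?thesis using assms(5) by (simp add: q_def)
qed

lemma int_indep_eliminate_step:
  assumes fin: "finite J" and indep: "int_indep X J r" and j0: "j0 \<in> J" and pivot: "r j0 z \<noteq> 0"
  shows "int_indep X (J - {j0}) (\<lambda>j v. r j0 z * r j v - r j z * r j0 v)"
  unfolding int_indep_def
proof (intro allI impI ballI)
  fix q j
  assume h: "\<forall>v\<in>X. (\<Sum>j\<in>J - {j0}. q j * (r j0 z * r j v - r j z * r j0 v)) = 0"
    and j: "j \<in> J - {j0}"
  define q' where "q' i = (if i = j0 then - (\<Sum>i\<in>J - {j0}. q i * r i z) else q i * r j0 z)" for i
  have "(\<Sum>i\<in>J. q' i * r i v) = 0" if v: "v \<in> X" for v
  proof -
    have "(\<Sum>i\<in>J. q' i * r i v) = q' j0 * r j0 v + (\<Sum>i\<in>J - {j0}. q' i * r i v)"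
      by (rule sum.remove[OF fin j0])
    also have "(\<Sum>i\<in>J - {j0}. q' i * r i v) = (\<Sum>i\<in>J - {j0}. q i * r j0 z * r i v)"
      by (rule sum.cong) (auto simp: q'_def)
    also have "q' j0 * r j0 v = - (\<Sum>i\<in>J - {j0}. q i * r i z * r j0 v)"
      by (simp add: q'_def sum_distrib_right)
    finally have "(\<Sum>i\<in>J. q' i * r i v) = (\<Sum>i\<in>J - {j0}. q i * (r j0 z * r i v - r i z * r j0 v))"
      by (simp add: sum_subtractf[symmetric] algebra_simps)
    then show ?thesis using h v by simp
  qed
  then have "q' j = 0" using indep j unfolding int_indep_def by blast
  then show "q j = 0" using pivot j by (simp add: q'_def)
qed

lemma int_indep_eliminate:
  assumes finJ: "finite J" and indep: "int_indep X J r"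
    and zeros: "\<forall>j\<in>J. \<forall>x\<in>H. int_form X (r j) x = 0"
    and finZ: "finite Z" and card: "card Z + t \<le> card J"
  shows "\<exists>J' r'. J' \<subseteq> J \<and> t \<le> card J' \<and> int_indep X J' r' \<and> (\<forall>j\<in>J'. \<forall>v\<in>Z. r' j v = 0) \<and>
           (\<forall>j\<in>J'. \<forall>x\<in>H. int_form X (r' j) x = 0)"
  using finZ card
proof (induction Z arbitrary: t rule: finite_induct)
  case empty
  then show ?case using indep zeros by (intro exI[of _ J] exI[of _ r]) auto
next
  case (insert z Z)
  then have "card Z + (t + 1) \<le> card J" by simp
  from insert.IH[OF this] obtain J0 r0 where J0: "J0 \<subseteq> J" "t + 1 \<le> card J0" "int_indep X J0 r0"
      "\<forall>j\<in>J0. \<forall>v\<in>Z. r0 j v = 0" "\<forall>j\<in>J0. \<forall>x\<in>H. int_form X (r0 j) x = 0"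
    by blast
  have finJ0: "finite J0" using J0(1) finJ finite_subset by blast
  show ?case
  proof (cases "\<forall>j\<in>J0. r0 j z = 0")
    case True
    then show ?thesis using J0 by (intro exI[of _ J0] exI[of _ r0]) auto
  next
    case False
    then obtain j0 where j0: "j0 \<in> J0" "r0 j0 z \<noteq> 0" by auto
    define r' where "r' j v = r0 j0 z * r0 j v - r0 j z * r0 j0 v" for j v
    have "int_form X (r' j) x =
        of_int (r0 j0 z) * int_form X (r0 j) x - of_int (r0 j z) * int_form X (r0 j0) x" for j x
      unfolding int_form_def r'_def by (simp add: sum_distrib_left sum_subtractf[symmetric] algebra_simps)
    then have "\<forall>j\<in>J0 - {j0}. \<forall>x\<in>H. int_form X (r' j) x = 0"
      using J0(5) j0(1) by simp
    moreover have "int_indep X (J0 - {j0}) r'"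
      unfolding r'_def by (rule int_indep_eliminate_step[OF finJ0 J0(3) j0])
    moreover have "t \<le> card (J0 - {j0})" using J0(2) j0 finJ0 by simp
    moreover have "\<forall>j\<in>J0 - {j0}. \<forall>v\<in>insert z Z. r' j v = 0"
      using J0(4) j0 unfolding r'_def by auto
    ultimately show ?thesis using J0(1) by (intro exI[of _ "J0 - {j0}"] exI[of _ r']) auto
  qed
qed

lemma floor_lattice_vec: "lattice_vec x \<Longrightarrow> of_int \<lfloor>x $ p\<rfloor> = x $ p"
  unfolding lattice_vec_def by (metis Ints_cases floor_of_int)

lemma int_indep_hyperplanes_distinct:
  fixes n1 n2 :: "real^'n"
  assumes lat: "lattice_vec n1" "lattice_vec n2"
    and indep: "\<And>q1 q2 :: int. of_int q1 *\<^sub>R n1 + of_int q2 *\<^sub>R n2 = 0 \<Longrightarrow> q1 = 0 \<and> q2 = 0"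
  shows "n1 \<noteq> 0" and "n2 \<noteq> 0" and "{x. x \<bullet> n1 = 0} \<noteq> {x. x \<bullet> n2 = 0}"
proof -
  show n1: "n1 \<noteq> 0" using indep[of 1 0] by auto
  show "n2 \<noteq> 0" using indep[of 0 1] by auto
  show "{x. x \<bullet> n1 = 0} \<noteq> {x. x \<bullet> n2 = 0}"
  proof
    assume eq: "{x. x \<bullet> n1 = 0} = {x. x \<bullet> n2 = 0}"
    obtain p0 where p0: "n1 $ p0 \<noteq> 0" using n1 by (auto simp: vec_eq_iff)
    have "n1 $ p0 * n2 $ p - n2 $ p0 * n1 $ p = 0" for p
    proof -
      define x where "x = n1 $ p0 *\<^sub>R axis p (1::real) - n1 $ p *\<^sub>R axis p0 1"
      have "x \<bullet> n1 = 0" unfolding x_def by (simp add: inner_diff_left inner_axis')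
      then have "x \<bullet> n2 = 0" using eq by blast
      then show ?thesis unfolding x_def by (simp add: inner_diff_left inner_axis')
    qed
    moreover have "of_int \<lfloor>n1 $ p0\<rfloor> = n1 $ p0" "of_int \<lfloor>n2 $ p0\<rfloor> = n2 $ p0"
      using floor_lattice_vec lat by metis+
    ultimately have "of_int (- \<lfloor>n2 $ p0\<rfloor>) *\<^sub>R n1 + of_int \<lfloor>n1 $ p0\<rfloor> *\<^sub>R n2 = 0"
      by (auto simp: vec_eq_iff algebra_simps)
    then have "\<lfloor>n1 $ p0\<rfloor> = 0" using indep by blast
    then show False using p0 floor_lattice_vec[OF lat(1), of p0] by simp
  qed
qed

section \<open>Flows on trees\<close>

definition tree_graph :: "'a set \<Rightarrow> 'a set set \<Rightarrow> bool" where
  "tree_graph Vs Es \<longleftrightarrow> finite Vs \<and> (\<forall>E\<in>Es. \<exists>a b. a \<in> Vs \<and> b \<in> Vs \<and> a \<noteq> b \<and> E = {a, b}) \<and>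
     (\<forall>x\<in>Vs. \<forall>y\<in>Vs. (x, y) \<in> {(x, y). {x, y} \<in> Es}\<^sup>*) \<and> card Es + 1 = card Vs"

lemma tree_graphD:
  assumes "tree_graph Vs Es"
  shows tree_graph_finite: "finite Vs"
    and tree_graph_edge: "E \<in> Es \<Longrightarrow> \<exists>a b. a \<in> Vs \<and> b \<in> Vs \<and> a \<noteq> b \<and> E = {a, b}"
    and tree_graph_connected: "x \<in> Vs \<Longrightarrow> y \<in> Vs \<Longrightarrow> (x, y) \<in> {(x, y). {x, y} \<in> Es}\<^sup>*"
    and tree_graph_card: "card Es + 1 = card Vs"
  using assms unfolding tree_graph_def by (elim conjE; simp)+

lemma tree_graph_edge_subset: "tree_graph Vs Es \<Longrightarrow> E \<in> Es \<Longrightarrow> E \<subseteq> Vs"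
  by (drule (1) tree_graph_edge) auto

lemma tree_graph_card_edge: "tree_graph Vs Es \<Longrightarrow> E \<in> Es \<Longrightarrow> card E = 2"
  by (drule (1) tree_graph_edge) auto

lemma tree_graph_finite_edges:
  assumes "tree_graph Vs Es"
  shows "finite Es"
proof (rule finite_subset)
  show "Es \<subseteq> Pow Vs" using tree_graph_edge_subset[OF assms] by blast
  show "finite (Pow Vs)" using tree_graph_finite[OF assms] by simp
qed

lemma sum_card_incident:
  assumes "finite Vs" "finite Es" "\<forall>E\<in>Es. E \<subseteq> Vs"
  shows "(\<Sum>V\<in>Vs. card {E\<in>Es. V \<in> E}) = (\<Sum>E\<in>Es. card E)"
proof -
  have "(\<Sum>V\<in>Vs. card {E\<in>Es. V \<in> E}) = (\<Sum>V\<in>Vs. \<Sum>E\<in>Es. if V \<in> E then 1 else 0)"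
    using assms by (simp add: sum.inter_filter[symmetric])
  also have "\<dots> = (\<Sum>E\<in>Es. \<Sum>V\<in>Vs. if V \<in> E then 1 else 0)" by (rule sum.swap)
  also have "\<dots> = (\<Sum>E\<in>Es. card E)"
  proof (rule sum.cong[OF refl])
    fix E assume "E \<in> Es"
    then have "{V\<in>Vs. V \<in> E} = E" using assms by auto
    then show "(\<Sum>V\<in>Vs. if V \<in> E then 1 else 0) = card E"
      using assms by (simp add: sum.inter_filter[symmetric])
  qed
  finally show ?thesis .
qed

lemma sum_card_fibres:
  assumes "finite Vs" "finite S" "\<forall>s\<in>S. f s \<in> Vs"
  shows "(\<Sum>V\<in>Vs. card {s\<in>S. f s = V}) = card S"
proof -
  have "(\<Sum>V\<in>Vs. card {s\<in>S. f s = V}) = (\<Sum>V\<in>Vs. \<Sum>s\<in>S. if f s = V then 1 else 0)"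
    using assms by (simp add: sum.inter_filter[symmetric])
  also have "\<dots> = (\<Sum>s\<in>S. \<Sum>V\<in>Vs. if f s = V then 1 else 0)" by (rule sum.swap)
  also have "\<dots> = (\<Sum>s\<in>S. 1)"
    using assms by (intro sum.cong) (auto simp: sum.delta')
  finally show ?thesis by simp
qed

lemma tree_graph_sum_degree:
  assumes "tree_graph Vs Es"
  shows "(\<Sum>V\<in>Vs. card {E\<in>Es. V \<in> E}) = 2 * card Es"
proof -
  have "(\<Sum>V\<in>Vs. card {E\<in>Es. V \<in> E}) = (\<Sum>E\<in>Es. card E)"
    using tree_graph_finite[OF assms] tree_graph_finite_edges[OF assms] tree_graph_edge_subset[OF assms]
    by (intro sum_card_incident) auto
  also have "\<dots> = 2 * card Es" using tree_graph_card_edge[OF assms] by simp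
  finally show ?thesis .
qed

lemma tree_graph_incident_edge:
  assumes tree: "tree_graph Vs Es" and v: "v \<in> Vs" and w: "w \<in> Vs" "w \<noteq> v"
  shows "{E\<in>Es. v \<in> E} \<noteq> {}"
proof -
  have "(v, w) \<in> {(x, y). {x, y} \<in> Es}\<^sup>*" using tree_graph_connected[OF tree v w(1)] .
  then obtain x where "{v, x} \<in> Es" using w(2) by (cases rule: converse_rtranclE) auto
  then show ?thesis by blast
qed

lemma tree_graph_has_leaf:
  assumes tree: "tree_graph Vs Es" and two: "2 \<le> card Vs"
  obtains v E0 where "v \<in> Vs" "{E\<in>Es. v \<in> E} = {E0}"
proof -
  have fin: "finite Vs" by (rule tree_graph_finite[OF tree])
  have "\<exists>v\<in>Vs. card {E\<in>Es. v \<in> E} < 2"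
  proof (rule ccontr)
    assume "\<not> ?thesis"
    then have "(\<Sum>V\<in>Vs. 2) \<le> (\<Sum>V\<in>Vs. card {E\<in>Es. V \<in> E})"
      by (intro sum_mono) (auto simp: not_less)
    then show False using tree_graph_sum_degree[OF tree] tree_graph_card[OF tree] by simp
  qed
  then obtain v where v: "v \<in> Vs" "card {E\<in>Es. v \<in> E} < 2" by blast
  have "card (Vs - {v}) \<noteq> 0" using two v(1) fin by simp
  then have "Vs - {v} \<noteq> {}" by (metis card.empty)
  then obtain w where "w \<in> Vs" "w \<noteq> v" by blast
  then have "{E\<in>Es. v \<in> E} \<noteq> {}" using tree_graph_incident_edge[OF tree v(1)] by blast
  moreover have "finite {E\<in>Es. v \<in> E}" using tree_graph_finite_edges[OF tree] by simp
  ultimately have "card {E\<in>Es. v \<in> E} \<noteq> 0" by simp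
  then have "card {E\<in>Es. v \<in> E} = 1" using v(2) by linarith
  then obtain E0 where "{E\<in>Es. v \<in> E} = {E0}" by (rule card_1_singletonE)
  with that v(1) show ?thesis by blast
qed

lemma rtrancl_avoid_leaf:
  assumes xy: "(x, y) \<in> {(x, y). {x, y} \<in> Es}\<^sup>*" and xv: "x \<noteq> v"
    and leaf: "{E\<in>Es. v \<in> E} = {{v, u}}" and uv: "u \<noteq> v"
  shows "(x, y) \<in> {(x, y). {x, y} \<in> Es - {{v, u}}}\<^sup>* \<or>
    (y = v \<and> (x, u) \<in> {(x, y). {x, y} \<in> Es - {{v, u}}}\<^sup>*)"
  using xy
proof (induction rule: rtrancl_induct)
  case base
  then show ?case by simp
next
  case (step y y')
  let ?R = "{(x, y). {x, y} \<in> Es - {{v, u}}}"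
  have e: "{y, y'} \<in> Es" using step.hyps(2) by simp
  have leaf': "E = {v, u}" if "E \<in> Es" "v \<in> E" for E using leaf that by blast
  have not_to_v: "(x, v) \<notin> ?R\<^sup>*"
  proof
    assume "(x, v) \<in> ?R\<^sup>*"
    then show False
    proof (cases rule: rtranclE)
      case (step z)
      then show ?thesis using leaf'[of "{z, v}"] by auto
    qed (use xv in simp)
  qed
  consider "y' = v" | "y = v" "y' \<noteq> v" | "y \<noteq> v" "y' \<noteq> v" by blast
  then show ?case
  proof cases
    case 1
    then have "y = u" using leaf'[OF e] uv by (auto simp: doubleton_eq_iff)
    then show ?thesis using step.IH uv 1 by blast
  next
    case 2
    then have "y' = u" using leaf'[OF e] by (auto simp: doubleton_eq_iff)
    then show ?thesis using step.IH not_to_v 2 by blast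
  next
    case 3
    then have "(y, y') \<in> ?R" using e leaf'[of "{y, y'}"] by auto
    moreover have "(x, y) \<in> ?R\<^sup>*" using step.IH 3(1) by blast
    ultimately show ?thesis by (blast intro: rtrancl_into_rtrancl)
  qed
qed

lemma tree_graph_remove_leaf:
  assumes tree: "tree_graph Vs Es" and v: "v \<in> Vs" and leaf: "{E\<in>Es. v \<in> E} = {E0}"
  shows "tree_graph (Vs - {v}) (Es - {E0})"
proof -
  have E0: "E0 \<in> Es" "v \<in> E0" using leaf by auto
  then obtain u where u: "E0 = {v, u}" "u \<noteq> v"
    using tree_graph_edge[OF tree E0(1)] by auto
  have avoid: "v \<notin> E" if "E \<in> Es - {E0}" for E using leaf that by blast
  have edges: "E \<in> Es - {E0} \<Longrightarrow> \<exists>a b. a \<in> Vs - {v} \<and> b \<in> Vs - {v} \<and> a \<noteq> b \<and> E = {a, b}" for E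
    using tree_graph_edge[OF tree, of E] avoid[of E] by blast
  have conn: "(x, y) \<in> {(x, y). {x, y} \<in> Es - {E0}}\<^sup>*" if "x \<in> Vs - {v}" "y \<in> Vs - {v}" for x y
    using rtrancl_avoid_leaf[OF tree_graph_connected[OF tree, of x y] _ leaf[unfolded u] u(2)] that u(1)
    by auto
  have card: "card (Es - {E0}) + 1 = card (Vs - {v})"
  proof -
    have "0 < card Es" using tree_graph_finite_edges[OF tree] E0(1) card_gt_0_iff by blast
    moreover have "card (Es - {E0}) = card Es - 1" "card (Vs - {v}) = card Vs - 1"
      using E0(1) v by simp_all
    ultimately show ?thesis using tree_graph_card[OF tree] by arith
  qed
  show ?thesis
    unfolding tree_graph_def
  proof (intro conjI ballI)
    show "finite (Vs - {v})" using tree_graph_finite[OF tree] by simp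
  qed (fact edges conn card)+
qed

lemma tree_graph_divergence_free:
  fixes f :: "'a set \<Rightarrow> 'b::ring_1"
  assumes "tree_graph Vs Es" and "\<forall>E\<in>Es. E = {a E, b E}"
    and "\<forall>V\<in>Vs. (\<Sum>E\<in>Es. f E * (of_bool (b E = V) - of_bool (a E = V))) = 0"
  shows "\<forall>E\<in>Es. f E = 0"
  using assms
proof (induction "card Vs" arbitrary: Vs Es)
  case 0
  then show ?case using tree_graph_card by fastforce
next
  case (Suc m)
  note tree = Suc.prems(1) and ends = Suc.prems(2) and div = Suc.prems(3)
  have finE: "finite Es" by (rule tree_graph_finite_edges[OF tree])
  show ?case
  proof (cases "card Vs = 1")
    case True
    then show ?thesis using tree_graph_card[OF tree] finE by simp
  next
    case False
    then have "2 \<le> card Vs" using Suc.hyps(2) by simp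
    then obtain v E0 where v: "v \<in> Vs" and leaf: "{E\<in>Es. v \<in> E} = {E0}"
      by (rule tree_graph_has_leaf[OF tree])
    have E0: "E0 \<in> Es" "v \<in> E0" using leaf by auto
    have off: "f E * (of_bool (b E = V) - of_bool (a E = V)) = 0" if "E \<in> Es - {E0}" "V \<notin> E" for E V
      using that ends by auto
    have split: "(\<Sum>E\<in>Es. f E * (of_bool (b E = V) - of_bool (a E = V))) =
        f E0 * (of_bool (b E0 = V) - of_bool (a E0 = V)) +
        (\<Sum>E\<in>Es - {E0}. f E * (of_bool (b E = V) - of_bool (a E = V)))" for V
      by (rule sum.remove[OF finE E0(1)])
    have "(\<Sum>E\<in>Es - {E0}. f E * (of_bool (b E = v) - of_bool (a E = v))) = 0"
      using off leaf by (intro sum.neutral) blast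
    moreover have "card {a E0, b E0} = 2" using tree_graph_card_edge[OF tree E0(1)] ends E0(1) by simp
    then have "a E0 \<noteq> b E0" by (cases "a E0 = b E0") auto
    moreover have "v = a E0 \<or> v = b E0" using ends E0 by blast
    ultimately have fE0: "f E0 = 0" using div v split[of v] by auto
    have "\<forall>E\<in>Es - {E0}. f E = 0"
    proof (rule Suc.hyps(1))
      show "m = card (Vs - {v})" using Suc.hyps(2) v by simp
      show "tree_graph (Vs - {v}) (Es - {E0})" by (rule tree_graph_remove_leaf[OF tree v leaf])
      show "\<forall>V\<in>Vs - {v}. (\<Sum>E\<in>Es - {E0}. f E * (of_bool (b E = V) - of_bool (a E = V))) = 0"
        using div split fE0 by simp
    qed (use ends in blast)
    with fE0 show ?thesis by blast
  qed
qed

section \<open>Deformations and equations of a disk type\<close>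

definition edge_ends :: "'a set \<Rightarrow> 'a \<times> 'a" where
  "edge_ends E = (SOME p. E = {fst p, snd p} \<and> fst p \<noteq> snd p)"

abbreviation src :: "'a set \<Rightarrow> 'a" where "src E \<equiv> fst (edge_ends E)"
abbreviation tgt :: "'a set \<Rightarrow> 'a" where "tgt E \<equiv> snd (edge_ends E)"

lemma edge_ends:
  assumes "E = {a, b}" "a \<noteq> b"
  shows "E = {src E, tgt E}" and "src E \<noteq> tgt E"
proof -
  have "\<exists>p. E = {fst p, snd p} \<and> fst p \<noteq> snd p" using assms by (intro exI[of _ "(a, b)"]) simp
  then have "E = {src E, tgt E} \<and> src E \<noteq> tgt E" unfolding edge_ends_def by (rule someI_ex)
  then show "E = {src E, tgt E}" and "src E \<noteq> tgt E" by blast+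
qed

lemma is_tdisk_tree_graph: "is_tdisk S \<tau> hv \<Longrightarrow> tree_graph (tverts \<tau>) (tedges \<tau>)"
  unfolding is_tdisk_def tree_graph_def by (elim conjE) simp

lemma is_tdisk_edge:
  assumes disk: "is_tdisk S \<tau> hv" and E: "E \<in> tedges \<tau>"
  shows "src E \<in> tverts \<tau>" "tgt E \<in> tverts \<tau>" "src E \<noteq> tgt E" "E = {src E, tgt E}"
    and "primitive_vec (tdir \<tau> (src E) E)"
    and "\<exists>l>0. hv (tgt E) - hv (src E) = l *\<^sub>R tdir \<tau> (src E) E"
proof -
  from disk E obtain a b where ab: "a \<in> tverts \<tau>" "b \<in> tverts \<tau>" "a \<noteq> b" "E = {a, b}"
    unfolding is_tdisk_def by blast
  show ends: "E = {src E, tgt E}" "src E \<noteq> tgt E" using edge_ends[OF ab(4,3)] by blast+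
  have "E \<subseteq> tverts \<tau>" using ab by simp
  moreover have "src E \<in> E" "tgt E \<in> E" using ends(1) by (metis insertI1, metis insertI1 insertI2)
  ultimately show "src E \<in> tverts \<tau>" "tgt E \<in> tverts \<tau>" by blast+
  have "{src E, tgt E} \<in> tedges \<tau>" using ends(1) E by simp
  then have "primitive_vec (tdir \<tau> (src E) {src E, tgt E}) \<and>
      (\<exists>l>0. hv (tgt E) - hv (src E) = l *\<^sub>R tdir \<tau> (src E) {src E, tgt E})"
    using disk ends(2) unfolding is_tdisk_def by blast
  then show "primitive_vec (tdir \<tau> (src E) E)" "\<exists>l>0. hv (tgt E) - hv (src E) = l *\<^sub>R tdir \<tau> (src E) E"
    using ends(1) by simp_all
qed

lemma matches_attach:
  assumes "matches e ww c \<delta> \<tau> hv" "s \<in> idx_set ww"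
  shows "hv (tattach \<tau> s) \<bullet> e (fst s) = \<delta> * c s"
proof -
  have "hv (tattach \<tau> s) + 0 *\<^sub>R tdirn \<tau> s \<in> {hv (tattach \<tau> s) + t *\<^sub>R tdirn \<tau> s | t. t \<ge> 0}" by blast
  then show ?thesis using assms unfolding matches_def by fastforce
qed

definition is_deformation :: "('i \<Rightarrow> real^'n) \<Rightarrow> ('i \<times> nat) set \<Rightarrow> ('i, real^'n) tdtype
    \<Rightarrow> (nat \<Rightarrow> real^'n) \<Rightarrow> bool" where
  "is_deformation e S \<tau> z \<longleftrightarrow>
     (\<forall>E\<in>tedges \<tau>. \<exists>\<mu>. z (tgt E) - z (src E) = \<mu> *\<^sub>R tdir \<tau> (src E) E) \<and>
     (\<forall>s\<in>S. z (tattach \<tau> s) \<bullet> e (fst s) = 0)"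

lemma deformation_of_realizations:
  assumes da: "is_tdisk (idx_set ww) \<tau> hva" "matches e ww c \<delta>a \<tau> hva"
    and db: "is_tdisk (idx_set ww) \<tau> hvb" "matches e ww c \<delta>b \<tau> hvb"
    and "\<delta>a \<noteq> 0"
  shows "is_deformation e (idx_set ww) \<tau> (\<lambda>V. hvb V - (\<delta>b / \<delta>a) *\<^sub>R hva V)"
  unfolding is_deformation_def
proof (intro conjI ballI)
  fix E assume E: "E \<in> tedges \<tau>"
  obtain la where "hva (tgt E) - hva (src E) = la *\<^sub>R tdir \<tau> (src E) E"
    using is_tdisk_edge(6)[OF da(1) E] by blast
  moreover obtain lb where "hvb (tgt E) - hvb (src E) = lb *\<^sub>R tdir \<tau> (src E) E"
    using is_tdisk_edge(6)[OF db(1) E] by blast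
  ultimately have "(hvb (tgt E) - (\<delta>b / \<delta>a) *\<^sub>R hva (tgt E)) - (hvb (src E) - (\<delta>b / \<delta>a) *\<^sub>R hva (src E))
      = (lb - \<delta>b / \<delta>a * la) *\<^sub>R tdir \<tau> (src E) E"
    by (simp add: algebra_simps flip: scaleR_diff_right)
  then show "\<exists>\<mu>. (hvb (tgt E) - (\<delta>b / \<delta>a) *\<^sub>R hva (tgt E)) - (hvb (src E) - (\<delta>b / \<delta>a) *\<^sub>R hva (src E))
      = \<mu> *\<^sub>R tdir \<tau> (src E) E" by blast
next
  fix s assume s: "s \<in> idx_set ww"
  show "(hvb (tattach \<tau> s) - (\<delta>b / \<delta>a) *\<^sub>R hva (tattach \<tau> s)) \<bullet> e (fst s) = 0"
    using matches_attach[OF da(2) s] matches_attach[OF db(2) s] \<open>\<delta>a \<noteq> 0\<close>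
    by (simp add: inner_diff_left)
qed

text \<open>The equations cutting out the disks of type \<tau>, as integer rows in the unknowns
  z_V (vertex positions, coordinatewise) and \<mu>_E (edge lengths): row (E, p) is the p-th
  coordinate of z_tgt(E) - z_src(E) - \<mu>_E u_E, row s is z_attach(s) \<bullet> e_s.  The floors
  only read off the integer entries of lattice vectors.\<close>
definition disk_unknowns :: "('i, 'v) tdtype \<Rightarrow> ((nat \<times> 'n) + nat set) set" where
  "disk_unknowns \<tau> = (tverts \<tau> \<times> UNIV) <+> tedges \<tau>"

definition disk_equations :: "('i, 'v) tdtype \<Rightarrow> ('i \<times> nat) set \<Rightarrow> ((nat set \<times> 'n) + ('i \<times> nat)) set" where
  "disk_equations \<tau> S = (tedges \<tau> \<times> UNIV) <+> S"

definition disk_rows :: "('i \<Rightarrow> real^'n) \<Rightarrow> ('i, real^'n) tdtype \<Rightarrow> (nat set \<times> 'n) + ('i \<times> nat)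
    \<Rightarrow> (nat \<times> 'n) + nat set \<Rightarrow> int" where
  "disk_rows e \<tau> j v = (case j of
      Inl (E, p) \<Rightarrow> (case v of
          Inl (V, p') \<Rightarrow> if p' = p then of_bool (V = tgt E) - of_bool (V = src E) else 0
        | Inr E' \<Rightarrow> if E' = E then - \<lfloor>tdir \<tau> (src E) E $ p\<rfloor> else 0)
    | Inr s \<Rightarrow> (case v of
          Inl (V, p) \<Rightarrow> if V = tattach \<tau> s then \<lfloor>e (fst s) $ p\<rfloor> else 0
        | Inr _ \<Rightarrow> 0))"

definition disk_point :: "(nat \<Rightarrow> real^'n) \<Rightarrow> (nat set \<Rightarrow> real) \<Rightarrow> (nat \<times> 'n) + nat set \<Rightarrow> real" where
  "disk_point z \<mu> v = (case v of Inl (V, p) \<Rightarrow> z V $ p | Inr E \<Rightarrow> \<mu> E)"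

lemma int_form_disk_point:
  assumes "finite (tverts \<tau>)" "finite (tedges \<tau>)"
  shows "int_form (disk_unknowns \<tau>) r (disk_point z \<mu>) =
    (\<Sum>V\<in>tverts \<tau>. \<Sum>p\<in>UNIV. of_int (r (Inl (V, p))) * z V $ p) + (\<Sum>E\<in>tedges \<tau>. of_int (r (Inr E)) * \<mu> E)"
proof -
  have "int_form (disk_unknowns \<tau>) r (disk_point z \<mu>) =
      (\<Sum>x\<in>tverts \<tau> \<times> UNIV. of_int (r (Inl x)) * disk_point z \<mu> (Inl x)) +
      (\<Sum>E\<in>tedges \<tau>. of_int (r (Inr E)) * disk_point z \<mu> (Inr E))"
    unfolding int_form_def disk_unknowns_def using assms by (simp add: sum.Plus comp_def)
  also have "(\<Sum>x\<in>tverts \<tau> \<times> UNIV. of_int (r (Inl x)) * disk_point z \<mu> (Inl x)) =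
      (\<Sum>V\<in>tverts \<tau>. \<Sum>p\<in>UNIV. of_int (r (Inl (V, p))) * z V $ p)"
    unfolding sum.cartesian_product by (rule sum.cong) (auto simp: disk_point_def)
  also have "(\<Sum>E\<in>tedges \<tau>. of_int (r (Inr E)) * disk_point z \<mu> (Inr E)) =
      (\<Sum>E\<in>tedges \<tau>. of_int (r (Inr E)) * \<mu> E)"
    by (simp add: disk_point_def)
  finally show ?thesis .
qed

lemma int_form_disk_rows_edge:
  fixes \<tau> :: "('i, real^'n) tdtype"
  assumes disk: "is_tdisk S \<tau> hv" and E: "E \<in> tedges \<tau>"
  shows "int_form (disk_unknowns \<tau>) (disk_rows e \<tau> (Inl (E, p))) (disk_point z \<mu>) =
     (z (tgt E) - z (src E) - \<mu> E *\<^sub>R tdir \<tau> (src E) E) $ p"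
proof -
  note ends = is_tdisk_edge[OF disk E]
  have fV: "finite (tverts \<tau>)" and fE: "finite (tedges \<tau>)"
    using is_tdisk_tree_graph[OF disk] by (rule tree_graph_finite, rule tree_graph_finite_edges)
  have lat: "lattice_vec (tdir \<tau> (src E) E)" using ends(5) unfolding primitive_vec_def by blast
  have "int_form (disk_unknowns \<tau>) (disk_rows e \<tau> (Inl (E, p))) (disk_point z \<mu>) =
     (\<Sum>V\<in>tverts \<tau>. \<Sum>p'\<in>UNIV. of_int (disk_rows e \<tau> (Inl (E, p)) (Inl (V, p'))) * z V $ p') +
     (\<Sum>E'\<in>tedges \<tau>. of_int (disk_rows e \<tau> (Inl (E, p)) (Inr E')) * \<mu> E')"
    by (rule int_form_disk_point[OF fV fE])
  also have "(\<Sum>V\<in>tverts \<tau>. \<Sum>p'\<in>UNIV. of_int (disk_rows e \<tau> (Inl (E, p)) (Inl (V, p'))) * z V $ p')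
      = (\<Sum>V\<in>tverts \<tau>. (if V = tgt E then z V $ p else 0) - (if V = src E then z V $ p else 0))"
  proof (rule sum.cong[OF refl])
    fix V
    have "of_int (disk_rows e \<tau> (Inl (E, p)) (Inl (V, p'))) * z V $ p' =
        (if p' = p then (if V = tgt E then z V $ p else 0) - (if V = src E then z V $ p else 0) else 0)" for p'
      using ends(3) by (auto simp: disk_rows_def)
    then show "(\<Sum>p'\<in>UNIV. of_int (disk_rows e \<tau> (Inl (E, p)) (Inl (V, p'))) * z V $ p') =
        (if V = tgt E then z V $ p else 0) - (if V = src E then z V $ p else 0)"
      by (simp add: sum.delta')
  qed
  also have "\<dots> = z (tgt E) $ p - z (src E) $ p"
    using ends(1,2) fV by (simp add: sum_subtractf sum.delta)
  also have "(\<Sum>E'\<in>tedges \<tau>. of_int (disk_rows e \<tau> (Inl (E, p)) (Inr E')) * \<mu> E') = - tdir \<tau> (src E) E $ p * \<mu> E"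
  proof -
    have "of_int (disk_rows e \<tau> (Inl (E, p)) (Inr E')) * \<mu> E' = (if E' = E then - tdir \<tau> (src E) E $ p * \<mu> E else 0)"
      for E'
      using floor_lattice_vec[OF lat, of p] by (simp add: disk_rows_def)
    then show ?thesis using E fE by (simp add: sum.delta)
  qed
  finally show ?thesis by (simp add: mult.commute)
qed

lemma int_form_disk_rows_leg:
  fixes \<tau> :: "('i, real^'n) tdtype"
  assumes disk: "is_tdisk S \<tau> hv" and s: "s \<in> S" and lat: "lattice_vec (e (fst s))"
  shows "int_form (disk_unknowns \<tau>) (disk_rows e \<tau> (Inr s)) (disk_point z \<mu>) = z (tattach \<tau> s) \<bullet> e (fst s)"
proof -
  have fV: "finite (tverts \<tau>)" and fE: "finite (tedges \<tau>)"
    using is_tdisk_tree_graph[OF disk] by (rule tree_graph_finite, rule tree_graph_finite_edges)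
  have att: "tattach \<tau> s \<in> tverts \<tau>" using disk s unfolding is_tdisk_def by blast
  have "int_form (disk_unknowns \<tau>) (disk_rows e \<tau> (Inr s)) (disk_point z \<mu>) =
      (\<Sum>p\<in>UNIV. \<Sum>V\<in>tverts \<tau>. of_int (disk_rows e \<tau> (Inr s) (Inl (V, p))) * z V $ p)"
    unfolding int_form_disk_point[OF fV fE] by (simp add: disk_rows_def sum.swap[of _ "tverts \<tau>"])
  also have "\<dots> = (\<Sum>p\<in>UNIV. z (tattach \<tau> s) $ p * e (fst s) $ p)"
  proof (rule sum.cong[OF refl])
    fix p
    have "of_int (disk_rows e \<tau> (Inr s) (Inl (V, p))) * z V $ p =
        (if V = tattach \<tau> s then z (tattach \<tau> s) $ p * e (fst s) $ p else 0)" for V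
      using floor_lattice_vec[OF lat, of p] by (simp add: disk_rows_def)
    then show "(\<Sum>V\<in>tverts \<tau>. of_int (disk_rows e \<tau> (Inr s) (Inl (V, p))) * z V $ p) =
        z (tattach \<tau> s) $ p * e (fst s) $ p"
      using att fV by (simp add: sum.delta')
  qed
  finally show ?thesis by (simp add: inner_vec_def)
qed

lemma sum_disk_equations:
  fixes f :: "(nat set \<times> 'n::finite) + ('i \<times> nat) \<Rightarrow> 'a::comm_monoid_add"
  assumes "finite (tedges \<tau>)" "finite S"
  shows "(\<Sum>j\<in>disk_equations \<tau> S. f j) = (\<Sum>E\<in>tedges \<tau>. \<Sum>p\<in>UNIV. f (Inl (E, p))) + (\<Sum>s\<in>S. f (Inr s))"
proof -
  have "(\<Sum>j\<in>disk_equations \<tau> S. f j) = (\<Sum>x\<in>tedges \<tau> \<times> UNIV. f (Inl x)) + (\<Sum>s\<in>S. f (Inr s))"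
    unfolding disk_equations_def using assms by (simp add: sum.Plus comp_def)
  also have "(\<Sum>x\<in>tedges \<tau> \<times> UNIV. f (Inl x)) = (\<Sum>E\<in>tedges \<tau>. \<Sum>p\<in>UNIV. f (Inl (E, p)))"
    unfolding sum.cartesian_product by (rule sum.cong) auto
  finally show ?thesis .
qed

lemma disk_rows_int_indep:
  fixes e :: "'i \<Rightarrow> real^'n" and \<tau> :: "('i, real^'n) tdtype"
  assumes finS: "finite S" and lat: "\<forall>i. lattice_vec (e i)"
    and generic: "\<forall>q::'i \<times> nat \<Rightarrow> int. (\<Sum>s\<in>S. of_int (q s) * c s) = 0 \<longrightarrow> (\<forall>s\<in>S. q s = 0)"
    and disk: "is_tdisk S \<tau> hv" and legs: "\<forall>s\<in>S. hv (tattach \<tau> s) \<bullet> e (fst s) = \<delta> * c s"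
    and "\<delta> \<noteq> 0"
  shows "int_indep (disk_unknowns \<tau>) (disk_equations \<tau> S) (disk_rows e \<tau>)"
  unfolding int_indep_def
proof (intro allI impI)
  let ?X = "disk_unknowns \<tau> :: ((nat \<times> 'n) + nat set) set" and ?r = "disk_rows e \<tau>"
  fix q assume hq: "\<forall>v\<in>?X. (\<Sum>j\<in>disk_equations \<tau> S. q j * ?r j v) = 0"
  have tree: "tree_graph (tverts \<tau>) (tedges \<tau>)" by (rule is_tdisk_tree_graph[OF disk])
  note fE = tree_graph_finite_edges[OF tree]
  obtain l where l: "\<forall>E\<in>tedges \<tau>. hv (tgt E) - hv (src E) = l E *\<^sub>R tdir \<tau> (src E) E"
    using is_tdisk_edge(6)[OF disk] by metis
  have "(\<Sum>j\<in>disk_equations \<tau> S. of_int (q j) * int_form ?X (?r j) (disk_point hv l)) = 0"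
    unfolding int_form_sum_rows using hq by (simp add: int_form_def)
  also have "(\<Sum>j\<in>disk_equations \<tau> S. of_int (q j) * int_form ?X (?r j) (disk_point hv l)) =
      \<delta> * (\<Sum>s\<in>S. of_int (q (Inr s)) * c s)"
    using l legs lat unfolding sum_disk_equations[OF fE finS]
    by (simp add: int_form_disk_rows_edge[OF disk] int_form_disk_rows_leg[OF disk] sum_distrib_left
        algebra_simps)
  finally have legs0: "\<forall>s\<in>S. q (Inr s) = 0" using generic \<open>\<delta> \<noteq> 0\<close> by auto
  have "\<forall>E\<in>tedges \<tau>. q (Inl (E, p)) = 0" for p
  proof (rule tree_graph_divergence_free[OF tree])
    show "\<forall>E\<in>tedges \<tau>. E = {src E, tgt E}" using is_tdisk_edge(4)[OF disk] by blast
    show "\<forall>V\<in>tverts \<tau>. (\<Sum>E\<in>tedges \<tau>. q (Inl (E, p)) * (of_bool (tgt E = V) - of_bool (src E = V))) = 0"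
    proof
      fix V assume V: "V \<in> tverts \<tau>"
      have "(\<Sum>p'\<in>UNIV. q (Inl (E, p')) * ?r (Inl (E, p')) (Inl (V, p))) =
          q (Inl (E, p)) * (of_bool (tgt E = V) - of_bool (src E = V))" for E
        by (simp add: disk_rows_def eq_commute if_distrib sum.delta' cong: if_cong)
      then have "(\<Sum>j\<in>disk_equations \<tau> S. q j * ?r j (Inl (V, p))) =
          (\<Sum>E\<in>tedges \<tau>. q (Inl (E, p)) * (of_bool (tgt E = V) - of_bool (src E = V)))"
        using legs0 unfolding sum_disk_equations[OF fE finS] by simp
      moreover have "Inl (V, p) \<in> ?X" using V unfolding disk_unknowns_def by blast
      ultimately show "(\<Sum>E\<in>tedges \<tau>. q (Inl (E, p)) * (of_bool (tgt E = V) - of_bool (src E = V))) = 0"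
        using hq by simp
    qed
  qed
  then show "\<forall>j\<in>disk_equations \<tau> S. q j = 0"
    using legs0 unfolding disk_equations_def by blast
qed

lemma is_tdisk_sum_tdeg:
  assumes disk: "is_tdisk S \<tau> hv" and finS: "finite S"
  shows "(\<Sum>V\<in>tverts \<tau>. tdeg S \<tau> V) = 2 * card (tedges \<tau>) + card S"
proof -
  have tree: "tree_graph (tverts \<tau>) (tedges \<tau>)" by (rule is_tdisk_tree_graph[OF disk])
  have "\<forall>s\<in>S. tattach \<tau> s \<in> tverts \<tau>" using disk unfolding is_tdisk_def by blast
  then show ?thesis
    unfolding tdeg_def sum.distrib
    using tree_graph_sum_degree[OF tree] sum_card_fibres[OF tree_graph_finite[OF tree] finS] by simp
qed

text \<open>Counting half-edges: V_\<infinity> is univalent and all other vertices have valence at least 3,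
  so a vertex of valence at least 4 forces at least two more legs than compact edges.\<close>
lemma nontrivalent_card_legs:
  assumes disk: "is_tdisk S \<tau> hv" and finS: "finite S" and nt: "\<not> trivalent S \<tau>"
  shows "card (tedges \<tau>) + 2 \<le> card S"
proof -
  let ?Vs = "tverts \<tau>" and ?root = "tinf \<tau>"
  have tree: "tree_graph ?Vs (tedges \<tau>)" by (rule is_tdisk_tree_graph[OF disk])
  have fV: "finite ?Vs" by (rule tree_graph_finite[OF tree])
  have root: "?root \<in> ?Vs" "tdeg S \<tau> ?root = 1" using disk unfolding is_tdisk_def by blast+
  have ge3: "3 \<le> tdeg S \<tau> V" if V: "V \<in> ?Vs - {?root}" for V
  proof -
    have "tdeg S \<tau> V \<noteq> 1" "tdeg S \<tau> V \<noteq> 2" using disk V unfolding is_tdisk_def by blast+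
    moreover have "{E\<in>tedges \<tau>. V \<in> E} \<noteq> {}" using tree_graph_incident_edge[OF tree _ root(1)] V by blast
    then have "tdeg S \<tau> V \<noteq> 0" using tree_graph_finite_edges[OF tree] unfolding tdeg_def by simp
    ultimately show ?thesis by linarith
  qed
  obtain V0 where V0: "V0 \<in> ?Vs - {?root}" "tdeg S \<tau> V0 \<noteq> 3"
    using nt unfolding trivalent_def by blast
  have "(\<Sum>V\<in>?Vs - {?root}. 3) < (\<Sum>V\<in>?Vs - {?root}. tdeg S \<tau> V)"
  proof (rule sum_strict_mono_ex1)
    show "\<exists>a\<in>?Vs - {?root}. 3 < tdeg S \<tau> a" using V0 ge3[OF V0(1)] by (intro bexI[OF _ V0(1)]) linarith
  qed (use fV ge3 in auto)
  moreover have "(\<Sum>V\<in>?Vs. tdeg S \<tau> V) = tdeg S \<tau> ?root + (\<Sum>V\<in>?Vs - {?root}. tdeg S \<tau> V)"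
    by (rule sum.remove[OF fV root(1)])
  ultimately show ?thesis
    using is_tdisk_sum_tdeg[OF disk finS] tree_graph_card[OF tree] root fV by simp
qed

lemma nontrivalent_deformation_hyperplanes:
  fixes e :: "'i \<Rightarrow> real^'n" and \<tau> :: "('i, real^'n) tdtype"
  assumes finS: "finite S" and lat: "\<forall>i. lattice_vec (e i)"
    and generic: "\<forall>q::'i \<times> nat \<Rightarrow> int. (\<Sum>s\<in>S. of_int (q s) * c s) = 0 \<longrightarrow> (\<forall>s\<in>S. q s = 0)"
    and disk: "is_tdisk S \<tau> hv" and legs: "\<forall>s\<in>S. hv (tattach \<tau> s) \<bullet> e (fst s) = \<delta> * c s"
    and "\<delta> \<noteq> 0" and nt: "\<not> trivalent S \<tau>"
  shows "\<exists>n1 n2. lattice_vec n1 \<and> n1 \<noteq> 0 \<and> lattice_vec n2 \<and> n2 \<noteq> 0 \<and>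
    {x. x \<bullet> n1 = 0} \<noteq> {x. x \<bullet> n2 = 0} \<and>
    (\<forall>z. is_deformation e S \<tau> z \<longrightarrow> z (tinf \<tau>) \<bullet> n1 = 0 \<and> z (tinf \<tau>) \<bullet> n2 = 0)"
proof -
  define X :: "((nat \<times> 'n) + nat set) set" where "X = disk_unknowns \<tau>"
  define J :: "((nat set \<times> 'n) + ('i \<times> nat)) set" where "J = disk_equations \<tau> S"
  define r where "r = disk_rows e \<tau>"
  define root where "root = tinf \<tau>"
  define Y :: "((nat \<times> 'n) + nat set) set" where "Y = range (\<lambda>p. Inl (root, p))"
  define H where "H = {x. \<forall>j\<in>J. int_form X (r j) x = 0}"
  have tree: "tree_graph (tverts \<tau>) (tedges \<tau>)" by (rule is_tdisk_tree_graph[OF disk])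
  note fV = tree_graph_finite[OF tree] and fE = tree_graph_finite_edges[OF tree]
  have rootV: "root \<in> tverts \<tau>" using disk unfolding is_tdisk_def root_def by blast
  have fX: "finite X" and fJ: "finite J" unfolding X_def J_def disk_unknowns_def disk_equations_def
    using fV fE finS by simp_all
  have YX: "Y \<subseteq> X" unfolding Y_def X_def disk_unknowns_def using rootV by auto
  have "card X = card (tedges \<tau>) * CARD('n) + card (tedges \<tau>) + CARD('n)"
    unfolding X_def disk_unknowns_def using fV fE tree_graph_card[OF tree, symmetric]
    by (simp add: card_Plus card_cartesian_product algebra_simps)
  moreover have "card Y = CARD('n)" unfolding Y_def by (simp add: card_image inj_on_def)
  ultimately have "card (X - Y) = card (tedges \<tau>) * CARD('n) + card (tedges \<tau>)"
    using card_Diff_subset[OF finite_subset[OF YX fX] YX] by simp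
  moreover have "card J = card (tedges \<tau>) * CARD('n) + card S"
    unfolding J_def disk_equations_def using fE finS by (simp add: card_Plus card_cartesian_product)
  ultimately have count: "card (X - Y) + 2 \<le> card J" using nontrivalent_card_legs[OF disk finS nt] by simp
  have indep: "int_indep X J r"
    unfolding X_def J_def r_def by (rule disk_rows_int_indep[OF finS lat generic disk legs \<open>\<delta> \<noteq> 0\<close>])
  have "\<forall>j\<in>J. \<forall>x\<in>H. int_form X (r j) x = 0" unfolding H_def by blast
  from int_indep_eliminate[OF fJ indep this finite_Diff[OF fX] count]
  obtain J' r' where J': "J' \<subseteq> J" "2 \<le> card J'" "int_indep X J' r'"
      "\<forall>j\<in>J'. \<forall>v\<in>X - Y. r' j v = 0" "\<forall>j\<in>J'. \<forall>x\<in>H. int_form X (r' j) x = 0"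
    by (elim exE conjE)
  have fJ': "finite J'" using J'(1) fJ finite_subset by blast
  obtain j1 j2 where j12: "j1 \<in> J'" "j2 \<in> J'" "j1 \<noteq> j2"
  proof -
    obtain j1 where j1: "j1 \<in> J'" using J'(2) by fastforce
    then have "1 \<le> card (J' - {j1})" using J'(2) fJ' by simp
    then obtain j2 where "j2 \<in> J' - {j1}" by (metis all_not_in_conv card.empty not_one_le_zero)
    then show ?thesis using that j1 by blast
  qed
  define n :: "_ \<Rightarrow> real^'n" where "n j = (\<chi> p. of_int (r' j (Inl (root, p))))" for j
  have form: "int_form X (r' j) (disk_point z \<mu>) = z root \<bullet> n j" if "j \<in> J'" for j z \<mu>
  proof -
    have "int_form X (r' j) (disk_point z \<mu>) = (\<Sum>v\<in>Y. of_int (r' j v) * disk_point z \<mu> v)"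
      unfolding int_form_def by (rule sum.mono_neutral_right) (use fX YX J'(4) that in auto)
    also have "\<dots> = z root \<bullet> n j"
      unfolding Y_def by (simp add: sum.reindex inj_on_def disk_point_def n_def inner_vec_def mult.commute)
    finally show ?thesis .
  qed
  have zero: "z root \<bullet> n j = 0" if z: "is_deformation e S \<tau> z" and j: "j \<in> J'" for z j
  proof -
    obtain \<mu> where \<mu>: "\<forall>E\<in>tedges \<tau>. z (tgt E) - z (src E) = \<mu> E *\<^sub>R tdir \<tau> (src E) E"
      using z unfolding is_deformation_def by metis
    have "disk_point z \<mu> \<in> H"
      using \<mu> z lat unfolding H_def J_def X_def r_def disk_equations_def is_deformation_def
      by (auto simp: int_form_disk_rows_edge[OF disk] int_form_disk_rows_leg[OF disk])
    then have "int_form X (r' j) (disk_point z \<mu>) = 0" using J'(5) j by blast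
    then show ?thesis using form[OF j] by simp
  qed
  have lat_n: "lattice_vec (n j)" for j unfolding n_def lattice_vec_def by simp
  have indep_n: "q1 = 0 \<and> q2 = 0" if "of_int q1 *\<^sub>R n j1 + of_int q2 *\<^sub>R n j2 = 0" for q1 q2
  proof (rule int_indep_pair[OF J'(3) fJ' j12])
    have root_col: "q1 * r' j1 (Inl (root, p)) + q2 * r' j2 (Inl (root, p)) = 0" for p
      using that unfolding n_def by (simp add: vec_eq_iff) (metis of_int_add of_int_eq_0_iff of_int_mult)
    show "\<forall>v\<in>X. q1 * r' j1 v + q2 * r' j2 v = 0"
    proof
      fix v assume "v \<in> X"
      show "q1 * r' j1 v + q2 * r' j2 v = 0"
      proof (cases "v \<in> Y")
        case True
        then obtain p where "v = Inl (root, p)" unfolding Y_def by blast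
        then show ?thesis using root_col by simp
      qed (use J'(4) j12 \<open>v \<in> X\<close> in simp)
    qed
  qed
  note distinct = int_indep_hyperplanes_distinct[OF lat_n lat_n indep_n]
  show ?thesis
  proof (intro exI conjI allI impI)
    show "lattice_vec (n j1)" "lattice_vec (n j2)" by (fact lat_n)+
    show "n j1 \<noteq> 0" by (rule distinct(1))
    show "n j2 \<noteq> 0" by (rule distinct(2))
    show "{x. x \<bullet> n j1 = 0} \<noteq> {x. x \<bullet> n j2 = 0}" by (rule distinct(3))
    fix z assume "is_deformation e S \<tau> z"
    then show "z (tinf \<tau>) \<bullet> n j1 = 0" "z (tinf \<tau>) \<bullet> n j2 = 0"
      using zero j12 unfolding root_def by blast+
  qed
qed

section \<open>Limits of realizations\<close>

lemma T_lim_realization: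
  assumes "\<tau> \<in> T_lim \<Omega> e ww c \<theta>"
  obtains \<delta> hv where "\<delta> > 0" "is_tdisk (idx_set ww) \<tau> hv" "matches e ww c \<delta> \<tau> hv"
proof -
  obtain \<delta>0 where \<delta>0: "\<delta>0 > 0"
    and h: "\<forall>\<delta>. 0 < \<delta> \<and> \<delta> < \<delta>0 \<longrightarrow> (\<exists>\<theta>'. dist \<theta>' \<theta> < 1 \<and> \<tau> \<in> T_delta \<Omega> e ww c \<delta> \<theta>')"
    using assms zero_less_one unfolding T_lim_def by blast
  have "0 < \<delta>0 / 2 \<and> \<delta>0 / 2 < \<delta>0" using \<delta>0 by simp
  then obtain \<theta>' where "\<tau> \<in> T_delta \<Omega> e ww c (\<delta>0 / 2) \<theta>'" using h by blast
  then obtain hv where "is_tdisk (idx_set ww) \<tau> hv" "matches e ww c (\<delta>0 / 2) \<tau> hv"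
    unfolding T_delta_def by blast
  with that[of "\<delta>0 / 2"] \<delta>0 show ?thesis by simp
qed

lemma T_lim_orthogonal:
  assumes \<tau>: "\<tau> \<in> T_lim \<Omega> e ww c \<theta>"
    and orth: "\<forall>z. is_deformation e (idx_set ww) \<tau> z \<longrightarrow> z (tinf \<tau>) \<bullet> n = 0"
  shows "\<theta> \<bullet> n = 0"
proof -
  have bound: "\<bar>\<theta> \<bullet> n\<bar> \<le> (norm n + 1) * \<epsilon>" if \<epsilon>: "\<epsilon> > 0" for \<epsilon>
  proof -
    from \<tau> \<epsilon> obtain \<delta>0 where \<delta>0: "\<delta>0 > 0" and
      h: "\<forall>\<delta>. 0 < \<delta> \<and> \<delta> < \<delta>0 \<longrightarrow> (\<exists>\<theta>'. dist \<theta>' \<theta> < \<epsilon> \<and> \<tau> \<in> T_delta \<Omega> e ww c \<delta> \<theta>')"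
      unfolding T_lim_def by blast
    define \<delta>a where "\<delta>a = \<delta>0 / 2"
    have \<delta>a: "0 < \<delta>a" "\<delta>a < \<delta>0" using \<delta>0 unfolding \<delta>a_def by auto
    obtain hva where ha: "dist (hva (tinf \<tau>)) \<theta> < \<epsilon>" "is_tdisk (idx_set ww) \<tau> hva" "matches e ww c \<delta>a \<tau> hva"
      using h \<delta>a unfolding T_delta_def by blast
    define K where "K = \<bar>hva (tinf \<tau>) \<bullet> n\<bar>"
    define \<delta> where "\<delta> = min (\<delta>0 / 2) (\<delta>a * \<epsilon> / (K + 1))"
    have K0: "K \<ge> 0" unfolding K_def by simp
    have \<delta>: "0 < \<delta>" "\<delta> < \<delta>0" unfolding \<delta>_def using \<delta>0 \<delta>a \<epsilon> K0 by auto
    obtain hvb where hb: "dist (hvb (tinf \<tau>)) \<theta> < \<epsilon>" "is_tdisk (idx_set ww) \<tau> hvb" "matches e ww c \<delta> \<tau> hvb"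
      using h \<delta> unfolding T_delta_def by blast
    define t where "t = \<delta> / \<delta>a"
    have t: "0 < t" "t * K \<le> \<epsilon>"
    proof -
      show "0 < t" unfolding t_def using \<delta> \<delta>a by simp
      have "t \<le> \<epsilon> / (K + 1)" unfolding t_def \<delta>_def using \<delta>a by (simp add: field_simps)
      then have "t * K \<le> \<epsilon> / (K + 1) * K" using K0 by (rule mult_right_mono)
      also have "\<dots> \<le> \<epsilon>" using K0 \<epsilon> by (simp add: field_simps)
      finally show "t * K \<le> \<epsilon>" .
    qed
    have "is_deformation e (idx_set ww) \<tau> (\<lambda>V. hvb V - t *\<^sub>R hva V)"
      unfolding t_def using deformation_of_realizations[OF ha(2,3) hb(2,3)] \<delta>a by simp
    then have "(hvb (tinf \<tau>) - t *\<^sub>R hva (tinf \<tau>)) \<bullet> n = 0" using orth by blast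
    then have "hvb (tinf \<tau>) \<bullet> n = t * (hva (tinf \<tau>) \<bullet> n)" by (simp add: inner_diff_left)
    then have small: "\<bar>hvb (tinf \<tau>) \<bullet> n\<bar> \<le> \<epsilon>" using t unfolding K_def by (simp add: abs_mult)
    have "norm (\<theta> - hvb (tinf \<tau>)) \<le> \<epsilon>" using hb(1) by (simp add: dist_norm norm_minus_commute)
    then have "\<bar>(\<theta> - hvb (tinf \<tau>)) \<bullet> n\<bar> \<le> \<epsilon> * norm n"
      using Cauchy_Schwarz_ineq2[of "\<theta> - hvb (tinf \<tau>)" n] mult_right_mono[of _ \<epsilon> "norm n"] by force
    moreover have "\<bar>\<theta> \<bullet> n\<bar> \<le> \<bar>(\<theta> - hvb (tinf \<tau>)) \<bullet> n\<bar> + \<bar>hvb (tinf \<tau>) \<bullet> n\<bar>"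
      using abs_triangle_ineq[of "(\<theta> - hvb (tinf \<tau>)) \<bullet> n" "hvb (tinf \<tau>) \<bullet> n"] by (simp add: inner_diff_left)
    ultimately show ?thesis using small by (simp add: algebra_simps)
  qed
  have "\<bar>\<theta> \<bullet> n\<bar> \<le> 0 + \<epsilon>" if "\<epsilon> > 0" for \<epsilon>
  proof -
    have "norm n + 1 > 0" by (simp add: add_nonneg_pos)
    then show ?thesis using bound[of "\<epsilon> / (norm n + 1)"] that by simp
  qed
  then have "\<bar>\<theta> \<bullet> n\<bar> \<le> 0" by (rule field_le_epsilon)
  then show ?thesis by simp
qed

lemma finite_idx_set: "finite (idx_set (ww :: 'i::finite \<Rightarrow> nat list))"
proof -
  have "idx_set ww = (SIGMA i:UNIV. {1..length (ww i)})" unfolding idx_set_def by auto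
  then show ?thesis by simp
qed

theorem lemma4p3:
  fixes \<Omega> :: "real^'n^'n" and e :: "'i::finite \<Rightarrow> real^'n"
    and \<sigma> :: "(real^'n) set" and ww :: "'i \<Rightarrow> nat list"
  assumes "\<forall>j k. \<Omega> $ j $ k \<in> \<int>" and "transpose \<Omega> = - \<Omega>"
    and "rat_poly_cone \<sigma>" and "strictly_convex_cone \<sigma>"
    and "\<forall>i. e i \<in> Lambda_plus \<sigma>"
    and "\<forall>i. sorted (ww i) \<and> (\<forall>x\<in>set (ww i). 0 < x)"
  shows "\<exists>N \<in> null_sets (Pi\<^sub>M (idx_set ww) (\<lambda>_. lborel)).
           \<forall>c \<in> (\<Pi>\<^sub>E s\<in>idx_set ww. UNIV) - N. \<forall>\<theta>::real^'n.
             (\<forall>n1 n2. lattice_vec n1 \<and> n1 \<noteq> 0 \<and> lattice_vec n2 \<and> n2 \<noteq> 0 \<and>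
                 \<theta> \<bullet> n1 = 0 \<and> \<theta> \<bullet> n2 = 0 \<longrightarrow> {x. x \<bullet> n1 = 0} = {x. x \<bullet> n2 = 0})
             \<longrightarrow> (\<forall>\<tau> \<in> T_lim \<Omega> e ww c \<theta>. trivalent (idx_set ww) \<tau>)"
proof -
  note finS = finite_idx_set[of ww]
  have lat: "\<forall>i. lattice_vec (e i)" using assms(5) unfolding Lambda_plus_def by simp
  obtain N where N: "N \<in> null_sets (Pi\<^sub>M (idx_set ww) (\<lambda>_. lborel))"
    and generic: "\<forall>c \<in> (\<Pi>\<^sub>E s\<in>idx_set ww. UNIV) - N. \<forall>q::'i \<times> nat \<Rightarrow> int.
      (\<Sum>s\<in>idx_set ww. real_of_int (q s) * c s) = 0 \<longrightarrow> (\<forall>s\<in>idx_set ww. q s = 0)"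
    using ae_no_integer_relation[OF finS] by (rule bexE)
  show ?thesis
  proof (intro bexI[OF _ N] ballI allI impI)
    fix c \<theta> \<tau>
    assume c: "c \<in> (\<Pi>\<^sub>E s\<in>idx_set ww. UNIV) - N"
      and \<theta>: "\<forall>n1 n2. lattice_vec n1 \<and> n1 \<noteq> 0 \<and> lattice_vec n2 \<and> n2 \<noteq> 0 \<and>
               \<theta> \<bullet> n1 = 0 \<and> \<theta> \<bullet> n2 = 0 \<longrightarrow> {x. x \<bullet> n1 = 0} = {x. x \<bullet> n2 = 0}"
      and \<tau>: "\<tau> \<in> T_lim \<Omega> e ww c \<theta>"
    show "trivalent (idx_set ww) \<tau>"
    proof (rule ccontr)
      assume nt: "\<not> trivalent (idx_set ww) \<tau>"
      obtain \<delta> hv where \<delta>: "\<delta> > 0" and disk: "is_tdisk (idx_set ww) \<tau> hv" "matches e ww c \<delta> \<tau> hv"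
        using T_lim_realization[OF \<tau>] .
      have legs: "\<forall>s\<in>idx_set ww. hv (tattach \<tau> s) \<bullet> e (fst s) = \<delta> * c s"
        using matches_attach[OF disk(2)] by blast
      from \<delta> have "\<delta> \<noteq> 0" by simp
      from nontrivalent_deformation_hyperplanes[OF finS lat bspec[OF generic c] disk(1) legs this nt]
      obtain n1 n2 where n: "lattice_vec n1" "n1 \<noteq> 0" "lattice_vec n2" "n2 \<noteq> 0"
        "{x. x \<bullet> n1 = 0} \<noteq> {x. x \<bullet> n2 = 0}"
        and orth: "\<forall>z. is_deformation e (idx_set ww) \<tau> z \<longrightarrow> z (tinf \<tau>) \<bullet> n1 = 0 \<and> z (tinf \<tau>) \<bullet> n2 = 0"
        by (elim exE conjE)
      have "\<theta> \<bullet> n1 = 0" by (rule T_lim_orthogonal[OF \<tau>]) (use orth in blast)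
      moreover have "\<theta> \<bullet> n2 = 0" by (rule T_lim_orthogonal[OF \<tau>]) (use orth in blast)
      ultimately have "{x. x \<bullet> n1 = 0} = {x. x \<bullet> n2 = 0}" using n by (intro \<theta>[rule_format]) simp
      with n(5) show False by contradiction
    qed
  qed
qed

end
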